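(* Let $X=[0,1]$ with the Euclidean metric, $T(x)=2x \bmod 1$, and $\mu$ Lebesgue measure. Let $(r_n)_n$ be a sequence of positive numbers with $n^2r_n\to0$. Then $(\mu\times\mu)(\liminf_n E_{n,r_n}^T)=0$.
   Context: For $n\in\mathbb{N}$ and $r>0$, $E_{n,r}^{T}:=\{(x,y)\in X\times X : |T^i x- T^j y|<r \text{ for some } 0\le i,j<n\}$; $E_{n,r_n}^T$ is this set with $r=r_n$. *)

theory Defs
  imports "HOL-Analysis.Analysis" "HOL-Library.Liminf_Limsup"
begin

definition doubling :: "real \<Rightarrow> real" where
  "doubling x = frac (2 * x)"

definition unit_leb :: "real measure" where
  "unit_leb = restrict_space lborel {0..1}"

definition E_set :: "(real \<Rightarrow> real) \<Rightarrow> nat \<Rightarrow> real \<Rightarrow> (real \<times> real) set" where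
  "E_set T n r = {(x, y). x \<in> {0..1} \<and> y \<in> {0..1} \<and>
      (\<exists>i<n. \<exists>j<n. \<bar>(T ^^ i) x - (T ^^ j) y\<bar> < r)}"

end

theory Submission
  imports Defs "HOL-Probability.Probability_Measure"
begin

text \<open>On [0,1] the iterate T^i is x \<mapsto> 2^i x - k with k \<in> {0..2^i}, so for fixed c the set
  {x. |T^i x - c| < r} is covered by 2^i + 1 intervals of length 2r/2^i and has measure at most 4r.
  By Fubini the same bound holds for {(x,y). |T^i x - T^j y| < r}, hence E_{n,r} has measure at most
  4n^2 r. If n^2 r_n \<rightarrow> 0 these measures tend to 0, so each \<Inter>_{m \<ge> N} E_{m,r_m} is null, and
  liminf E_{n,r_n} is the countable union of these sets.\<close>

lemma sets_liminf:
  assumes "range A \<subseteq> sets M"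
  shows "liminf A \<in> sets M"
  unfolding liminf_SUP_INF using assms by (auto intro!: sets.countable_INT')

lemma emeasure_liminf_eq_0:
  assumes A: "range A \<subseteq> sets M"
    and lim: "liminf (\<lambda>n. emeasure M (A n)) = 0"
  shows "emeasure M (liminf A) = 0"
proof -
  have tail_sets: "(\<Inter>m\<in>{N..}. A m) \<in> sets M" for N
    using A by (auto intro!: sets.countable_INT')
  have tail_null: "emeasure M (\<Inter>m\<in>{N..}. A m) = 0" for N
  proof -
    have "emeasure M (\<Inter>m\<in>{N..}. A m) \<le> (INF m\<in>{N..}. emeasure M (A m))"
      using A by (intro INF_greatest emeasure_mono) auto
    also have "\<dots> \<le> liminf (\<lambda>n. emeasure M (A n))"
      unfolding liminf_SUP_INF by (rule SUP_upper) simp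
    finally show ?thesis using lim by simp
  qed
  show ?thesis
    unfolding liminf_SUP_INF using tail_sets tail_null
    by (auto intro: emeasure_UN_eq_0)
qed

lemma frac_double_frac: "frac (2 * frac x) = frac (2 * (x::real))"
proof -
  have "2 * frac x = 2 * x + of_int (- 2 * floor x)" by (simp add: frac_def)
  then show ?thesis by (simp only: frac_add_of_int_right)
qed

lemma doubling_funpow_Suc: "(doubling ^^ Suc i) x = frac (2 ^ Suc i * x)"
  by (induction i) (simp_all add: doubling_def frac_double_frac mult.assoc)

lemma doubling_funpow_eq_shift:
  assumes "x \<in> {0..1}"
  obtains k :: nat where "k \<le> 2 ^ i" "(doubling ^^ i) x = 2 ^ i * x - real k"
proof (cases i)
  case 0
  with that show ?thesis by simp
next
  case (Suc m)
  define k where "k = floor (2 ^ i * x)"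
  have "0 \<le> k" unfolding k_def using assms by auto
  moreover have "k \<le> 2 ^ i"
    unfolding k_def using assms
    by (metis atLeastAtMost_iff floor_of_int floor_mono mult_right_le_one_le
        of_int_numeral of_int_power zero_le_numeral zero_le_power)
  moreover have "(doubling ^^ i) x = 2 ^ i * x - real_of_int k"
    using Suc doubling_funpow_Suc[of m x] by (simp add: frac_def k_def)
  ultimately show ?thesis
    using that[of "nat k"] by (simp add: nat_le_iff)
qed

lemma borel_measurable_doubling_funpow: "(doubling ^^ i) \<in> borel_measurable borel"
proof (cases i)
  case (Suc k)
  then have "doubling ^^ i = (\<lambda>x. 2 ^ i * x - real_of_int (floor (2 ^ i * x)))"
    by (intro ext) (simp only: doubling_funpow_Suc frac_def)
  then show ?thesis by simp
qed simp

lemma measurable_doubling_funpow_unit_leb [measurable]: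
  "(doubling ^^ i) \<in> borel_measurable unit_leb"
  unfolding unit_leb_def
  by (rule measurable_restrict_space1) (simp add: borel_measurable_doubling_funpow)

lemma space_unit_leb [simp]: "space unit_leb = {0..1}"
  by (simp add: unit_leb_def space_restrict_space)

lemma emeasure_unit_leb: "A \<subseteq> {0..1} \<Longrightarrow> emeasure unit_leb A = emeasure lborel A"
  unfolding unit_leb_def by (intro emeasure_restrict_space) auto

lemma prob_space_unit_leb: "prob_space unit_leb"
  unfolding unit_leb_def by (intro prob_space_restrict_space) auto

lemma emeasure_doubling_funpow_near_le:
  assumes r: "r > 0"
  shows "emeasure unit_leb {x\<in>{0..1}. \<bar>(doubling ^^ i) x - c\<bar> < r} \<le> ennreal (4 * r)"
proof -
  let ?A = "{x\<in>{0..1}. \<bar>(doubling ^^ i) x - c\<bar> < r}"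
  let ?I = "\<lambda>k::nat. {(real k + c - r) / 2 ^ i <..< (real k + c + r) / 2 ^ i}"
  have cover: "?A \<subseteq> (\<Union>k\<in>{0..2 ^ i}. ?I k)"
  proof
    fix x assume x: "x \<in> ?A"
    then obtain k :: nat where k: "k \<le> 2 ^ i" "(doubling ^^ i) x = 2 ^ i * x - real k"
      using doubling_funpow_eq_shift[of x i] by auto
    then have "x \<in> ?I k" using x by (auto simp: field_simps abs_less_iff)
    with k show "x \<in> (\<Union>k\<in>{0..2 ^ i}. ?I k)" by auto
  qed
  have length: "emeasure lborel (?I k) = ennreal (2 * r / 2 ^ i)" for k
  proof -
    have "(real k + c - r) / 2 ^ i \<le> (real k + c + r) / 2 ^ i"
      using r by (simp add: divide_right_mono)
    then show ?thesis by (simp add: diff_divide_distrib[symmetric])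
  qed
  have "emeasure unit_leb ?A = emeasure lborel ?A"
    by (intro emeasure_unit_leb) auto
  also have "\<dots> \<le> emeasure lborel (\<Union>k\<in>{0..2 ^ i}. ?I k)"
    by (intro emeasure_mono cover) auto
  also have "\<dots> \<le> (\<Sum>k\<in>{0..2 ^ i}. emeasure lborel (?I k))"
    by (intro emeasure_subadditive_finite) auto
  also have "\<dots> = of_nat (2 ^ i + 1) * ennreal (2 * r / 2 ^ i)"
    by (simp add: length)
  also have "\<dots> = ennreal (real (2 ^ i + 1) * (2 * r / 2 ^ i))"
    by (simp only: ennreal_of_nat_eq_real_of_nat ennreal_mult'[symmetric] of_nat_0_le_iff)
  also have "\<dots> \<le> ennreal (4 * r)"
  proof (intro ennreal_leI)
    have "real (2 ^ i + 1) * (2 * r / 2 ^ i) = 2 * r + 2 * r / 2 ^ i"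
      by (simp add: field_simps)
    also have "\<dots> \<le> 4 * r" using r by (simp add: divide_le_eq)
    finally show "real (2 ^ i + 1) * (2 * r / 2 ^ i) \<le> 4 * r" .
  qed
  finally show ?thesis .
qed

definition close_iterates :: "nat \<Rightarrow> nat \<Rightarrow> real \<Rightarrow> (real \<times> real) set" where
  "close_iterates i j r = {p \<in> space (unit_leb \<Otimes>\<^sub>M unit_leb).
     \<bar>(doubling ^^ i) (fst p) - (doubling ^^ j) (snd p)\<bar> < r}"

lemma close_iterates_sets: "close_iterates i j r \<in> sets (unit_leb \<Otimes>\<^sub>M unit_leb)"
  unfolding close_iterates_def by measurable

lemma emeasure_close_iterates_le:
  assumes r: "r > 0"
  shows "emeasure (unit_leb \<Otimes>\<^sub>M unit_leb) (close_iterates i j r) \<le> ennreal (4 * r)"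
proof -
  interpret prob_space unit_leb by (rule prob_space_unit_leb)
  have "emeasure (unit_leb \<Otimes>\<^sub>M unit_leb) (close_iterates i j r)
      = (\<integral>\<^sup>+x. emeasure unit_leb (Pair x -` close_iterates i j r) \<partial>unit_leb)"
    by (rule emeasure_pair_measure_alt[OF close_iterates_sets])
  also have "\<dots> \<le> (\<integral>\<^sup>+x. ennreal (4 * r) \<partial>unit_leb)"
  proof (intro nn_integral_mono)
    fix x assume "x \<in> space unit_leb"
    then have "Pair x -` close_iterates i j r
        = {y\<in>{0..1}. \<bar>(doubling ^^ j) y - (doubling ^^ i) x\<bar> < r}"
      by (auto simp: close_iterates_def space_pair_measure abs_minus_commute)
    then show "emeasure unit_leb (Pair x -` close_iterates i j r) \<le> ennreal (4 * r)"
      using emeasure_doubling_funpow_near_le[OF r] by simp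
  qed
  also have "\<dots> = ennreal (4 * r)"
    using emeasure_space_1 by simp
  finally show ?thesis .
qed

lemma E_set_doubling_eq_UN:
  "E_set doubling n r = (\<Union>p\<in>{..<n} \<times> {..<n}. close_iterates (fst p) (snd p) r)"
  by (auto simp: E_set_def close_iterates_def space_pair_measure) blast

lemma E_set_doubling_sets: "E_set doubling n r \<in> sets (unit_leb \<Otimes>\<^sub>M unit_leb)"
  unfolding E_set_doubling_eq_UN by (auto intro!: sets.finite_UN close_iterates_sets)

lemma emeasure_E_set_doubling_le:
  assumes r: "r > 0"
  shows "emeasure (unit_leb \<Otimes>\<^sub>M unit_leb) (E_set doubling n r) \<le> ennreal (4 * real n ^ 2 * r)"
proof -
  have "emeasure (unit_leb \<Otimes>\<^sub>M unit_leb) (E_set doubling n r)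
     \<le> (\<Sum>p\<in>{..<n} \<times> {..<n}.
         emeasure (unit_leb \<Otimes>\<^sub>M unit_leb) (close_iterates (fst p) (snd p) r))"
    unfolding E_set_doubling_eq_UN
    by (intro emeasure_subadditive_finite) (auto simp: close_iterates_sets)
  also have "\<dots> \<le> (\<Sum>p\<in>{..<n} \<times> {..<n}. ennreal (4 * r))"
    by (intro sum_mono emeasure_close_iterates_le[OF r])
  also have "\<dots> = of_nat (n * n) * ennreal (4 * r)"
    by simp
  also have "\<dots> = ennreal (real (n * n) * (4 * r))"
    by (simp only: ennreal_of_nat_eq_real_of_nat ennreal_mult'[symmetric] of_nat_0_le_iff)
  also have "\<dots> = ennreal (4 * real n ^ 2 * r)"
    by (simp add: power2_eq_square algebra_simps)
  finally show ?thesis .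
qed

theorem mainTheorem6:
  fixes r :: "nat \<Rightarrow> real"
  assumes "\<And>n. r n > 0"
    and "(\<lambda>n. real n ^ 2 * r n) \<longlonglongrightarrow> 0"
  shows "liminf (\<lambda>n. E_set doubling n (r n)) \<in> sets (unit_leb \<Otimes>\<^sub>M unit_leb)
    \<and> emeasure (unit_leb \<Otimes>\<^sub>M unit_leb) (liminf (\<lambda>n. E_set doubling n (r n))) = 0"
proof -
  let ?M = "unit_leb \<Otimes>\<^sub>M unit_leb" and ?E = "\<lambda>n. E_set doubling n (r n)"
  have sets: "range ?E \<subseteq> sets ?M"
    using E_set_doubling_sets by auto
  have "(\<lambda>n. 4 * real n ^ 2 * r n) \<longlonglongrightarrow> 0"
    using tendsto_mult_left[OF assms(2), of 4] by (simp add: mult.assoc)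
  then have "(\<lambda>n. ennreal (4 * real n ^ 2 * r n)) \<longlonglongrightarrow> 0"
    using tendsto_ennrealI by fastforce
  then have "liminf (\<lambda>n. ennreal (4 * real n ^ 2 * r n)) = 0"
    by (intro lim_imp_Liminf) simp
  moreover have "liminf (\<lambda>n. emeasure ?M (?E n)) \<le> liminf (\<lambda>n. ennreal (4 * real n ^ 2 * r n))"
    by (intro Liminf_mono always_eventually allI emeasure_E_set_doubling_le assms(1))
  ultimately have "liminf (\<lambda>n. emeasure ?M (?E n)) = 0"
    by simp
  with sets show ?thesis
    by (simp add: sets_liminf emeasure_liminf_eq_0)
qed

end
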